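(* Let $K\ge 2$, $N\ge 2K$ (allowing $N=\infty$), let $B$ be a fully simplified parameter set of size $K$, let $x$ be a causal sequence with $x[0]\neq0$ and $y=h[\cdot;B]*x$. Let $d(\cdot,\cdot)\ge 0$ be any function on pairs of length-$N$ vectors with $d(a,b)=0$ iff $a=b$, and define on ordered parameter vectors $\tilde B^{\mathrm{ord}}=((\tilde b_k,\tilde\beta_k))_{k=1}^K\in\mathbb{C}^{2K}$ the objective $\mathcal{L}(\tilde B^{\mathrm{ord}})=d\big((y[n])_{0\le n<N},((h[\cdot;\tilde B^{\mathrm{ord}}]*x)[n])_{0\le n<N}\big)$. Then for any ordering $B^{\mathrm{ord}}$ of $B$ and any non-identity permutation $\sigma$ of $\{1,\dots,K\}$, $\mathcal{L}(B^{\mathrm{ord}})=\mathcal{L}(\sigma(B^{\mathrm{ord}}))=0$ while $\mathcal{L}(\lambda B^{\mathrm{ord}}+(1-\lambda)\sigma(B^{\mathrm{ord}}))>0$ for every $0<\lambda<1$. In particular $\mathcal{L}$ is not convex on $\mathbb{C}^{2K}\cong\mathbb{R}^{4K}$.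
   Context: A parameter set is an unordered finite set $B=\{(b_k,\beta_k)\}_{k=1}^K$ with $b_k,\beta_k\in\mathbb{C}$; it is fully simplified if the poles are pairwise distinct and all coefficients are nonzero. For a list of pairs $((c_k,\gamma_k))_k$ the causal impulse response is $h[n]=\sum_k c_k\gamma_k^n$ for $n\ge0$, $0$ for $n<0$ ($0^0=1$). For an ordered vector $B^{\mathrm{ord}}=((b_k,\beta_k))_k$, $\sigma(B^{\mathrm{ord}})=((b_{\sigma(k)},\beta_{\sigma(k)}))_k$, and convex combinations are taken componentwise. Causal sequences vanish at negative indices and $(h*x)[n]=\sum_m h[m]x[n-m]$. *)

theory Defs
  imports "HOL-Analysis.Analysis" "HOL-Library.Extended_Nat"
begin

text \<open>Sequences are indexed by nat; causal sequences are identified with their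
restriction to nonnegative indices (they vanish at negative indices).\<close>

definition h_set :: "(complex \<times> complex) set \<Rightarrow> nat \<Rightarrow> complex" where
  "h_set B n = (\<Sum>p\<in>B. fst p * snd p ^ n)"

definition h_list :: "(complex \<times> complex) list \<Rightarrow> nat \<Rightarrow> complex" where
  "h_list L n = (\<Sum>p\<leftarrow>L. fst p * snd p ^ n)"

definition conv :: "(nat \<Rightarrow> complex) \<Rightarrow> (nat \<Rightarrow> complex) \<Rightarrow> nat \<Rightarrow> complex" where
  "conv h x n = (\<Sum>m\<le>n. h m * x (n - m))"

text \<open>Truncation to the first N samples (N = \<infinity> allowed): a length-N vector is a
sequence vanishing at indices n with n \<ge> N.\<close>
definition trunc :: "enat \<Rightarrow> (nat \<Rightarrow> complex) \<Rightarrow> nat \<Rightarrow> complex" where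
  "trunc N a n = (if enat n < N then a n else 0)"

definition vecs :: "enat \<Rightarrow> (nat \<Rightarrow> complex) set" where
  "vecs N = {a. \<forall>n. \<not> enat n < N \<longrightarrow> a n = 0}"

definition fully_simplified :: "(complex \<times> complex) set \<Rightarrow> bool" where
  "fully_simplified B \<longleftrightarrow> finite B \<and> inj_on snd B \<and> (\<forall>p\<in>B. fst p \<noteq> 0)"

definition objective ::
  "((nat \<Rightarrow> complex) \<Rightarrow> (nat \<Rightarrow> complex) \<Rightarrow> real) \<Rightarrow> enat \<Rightarrow> (nat \<Rightarrow> complex)
    \<Rightarrow> (nat \<Rightarrow> complex) \<Rightarrow> (complex \<times> complex) list \<Rightarrow> real" where
  "objective d N y x Bt = d (trunc N y) (trunc N (conv (h_list Bt) x))"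

text \<open>Permutation action on ordered vectors (indices 0..K-1).\<close>
definition perm_ord :: "(nat \<Rightarrow> nat) \<Rightarrow> (complex \<times> complex) list \<Rightarrow> (complex \<times> complex) list" where
  "perm_ord \<sigma> L = map (\<lambda>k. L ! \<sigma> k) [0..<length L]"

definition cvx :: "real \<Rightarrow> (complex \<times> complex) list \<Rightarrow> (complex \<times> complex) list \<Rightarrow> (complex \<times> complex) list" where
  "cvx l U V = map2 (\<lambda>u v. (of_real l * fst u + of_real (1 - l) * fst v,
                           of_real l * snd u + of_real (1 - l) * snd v)) U V"

end

theory Submission
  imports Defs
begin

(* If the averaged parameters reproduced y on the first 2K samples, then, as x[0] <> 0, their
   impulse response would agree with h[.;B] for n < 2K.  An exponential sum with at most 2K
   distinct poles vanishing at n = 0, ..., 2K-1 has zero coefficients (Vandermonde), so every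
   pole beta_k of B occurs among the averaged poles gamma_k = lambda beta_k + (1-lambda) beta_sigma(k),
   and since there are K of each the two pole sets coincide.  Then sum |gamma_k|^2 = sum |beta_k|^2,
   whereas strict convexity of |.|^2 gives
     sum |gamma_k|^2 = sum |beta_k|^2 - lambda (1-lambda) sum |beta_k - beta_sigma(k)|^2,
   which is strictly smaller because sigma moves some k and the poles are distinct. *)

lemma sum_powers_eq_0_imp_coeffs_eq_0:
  fixes S :: "'a::idom set" and a :: "'a \<Rightarrow> 'a"
  assumes "finite S" and "card S \<le> M" and "\<forall>n<M. (\<Sum>s\<in>S. a s * s ^ n) = 0"
  shows "\<forall>s\<in>S. a s = 0"
  using assms
proof (induction S arbitrary: M a rule: finite_induct)
  case empty
  then show ?case by simp
next
  case (insert s0 T M a)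
  then obtain M' where M: "M = Suc M'" "card T \<le> M'"
    by (cases M) auto
  \<comment> \<open>Multiplying by \<open>s - s0\<close> removes the node \<open>s0\<close> at the cost of one moment.\<close>
  have "\<forall>n<M'. (\<Sum>s\<in>T. a s * (s - s0) * s ^ n) = 0"
  proof (intro allI impI)
    fix n assume "n < M'"
    then have "(\<Sum>s\<in>insert s0 T. a s * s ^ Suc n) = 0" "(\<Sum>s\<in>insert s0 T. a s * s ^ n) = 0"
      using insert.prems(2) M(1) by auto
    moreover have "(\<Sum>s\<in>T. a s * (s - s0) * s ^ n) =
        (\<Sum>s\<in>insert s0 T. a s * s ^ Suc n) - s0 * (\<Sum>s\<in>insert s0 T. a s * s ^ n)"
      using insert.hyps by (simp add: sum_distrib_left sum_subtractf[symmetric] algebra_simps)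
    ultimately show "(\<Sum>s\<in>T. a s * (s - s0) * s ^ n) = 0" by simp
  qed
  with insert.IH[OF M(2)] have T0: "\<forall>s\<in>T. a s = 0"
    using insert.hyps(2) by fastforce
  have "(\<Sum>s\<in>insert s0 T. a s * s ^ 0) = 0" using insert.prems(2) M(1) by blast
  with insert.hyps T0 have "a s0 = 0" by simp
  with T0 show ?case by simp
qed

lemma sum_powers_eq_imp_nodes_subset:
  fixes \<beta> :: "'i \<Rightarrow> 'a::idom" and \<gamma> :: "'j \<Rightarrow> 'a"
  assumes "finite I" and "finite J" and "inj_on \<beta> I" and "\<forall>i\<in>I. b i \<noteq> 0"
    and "\<forall>n < card I + card J. (\<Sum>i\<in>I. b i * \<beta> i ^ n) = (\<Sum>j\<in>J. c j * \<gamma> j ^ n)"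
  shows "\<beta> ` I \<subseteq> \<gamma> ` J"
proof
  define S where "S = \<beta> ` I \<union> \<gamma> ` J"
  define a where "a s = (\<Sum>i | i \<in> I \<and> \<beta> i = s. b i) - (\<Sum>j | j \<in> J \<and> \<gamma> j = s. c j)" for s
  have "finite S" using assms(1,2) by (simp add: S_def)
  have "card S \<le> card I + card J"
    unfolding S_def by (meson card_Un_le card_image_le add_mono assms(1,2) order_trans)
  have group: "(\<Sum>s\<in>S. (\<Sum>k | k \<in> K \<and> f k = s. e k) * s ^ n) = (\<Sum>k\<in>K. e k * f k ^ n)"
    if "finite K" and "f ` K \<subseteq> S" for K :: "'k set" and f e n
    unfolding sum_distrib_right
    by (rule sum.group[OF that(1) \<open>finite S\<close> that(2), of "\<lambda>k. e k * f k ^ n", simplified])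
  have "(\<Sum>s\<in>S. a s * s ^ n) = (\<Sum>i\<in>I. b i * \<beta> i ^ n) - (\<Sum>j\<in>J. c j * \<gamma> j ^ n)" for n
  proof -
    have "\<beta> ` I \<subseteq> S" "\<gamma> ` J \<subseteq> S" by (auto simp: S_def)
    then show ?thesis
      unfolding a_def left_diff_distrib sum_subtractf by (simp add: group assms(1,2))
  qed
  with assms(5) have "\<forall>n < card I + card J. (\<Sum>s\<in>S. a s * s ^ n) = 0" by simp
  with \<open>finite S\<close> \<open>card S \<le> _\<close> have a0: "\<forall>s\<in>S. a s = 0"
    by (rule sum_powers_eq_0_imp_coeffs_eq_0)
  fix s assume "s \<in> \<beta> ` I"
  then obtain i where i: "i \<in> I" "s = \<beta> i" by blast
  have "{k. k \<in> I \<and> \<beta> k = s} = {i}" using assms(3) i by (auto dest: inj_onD)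
  moreover have "a s = 0" using a0 i by (simp add: S_def)
  ultimately have "(\<Sum>j | j \<in> J \<and> \<gamma> j = s. c j) = b i" by (simp add: a_def)
  with assms(4) i have "{j. j \<in> J \<and> \<gamma> j = s} \<noteq> {}" by force
  then show "s \<in> \<gamma> ` J" by blast
qed

lemma conv_eq_imp_eq_below:
  assumes "x 0 \<noteq> 0" and "\<forall>n<M. conv h1 x n = conv h2 x n"
  shows "\<forall>n<M. h1 n = h2 n"
proof (intro allI impI)
  fix n show "n < M \<Longrightarrow> h1 n = h2 n"
  proof (induction n rule: less_induct)
    case (less n)
    have split: "conv h x n = h n * x 0 + (\<Sum>m<n. h m * x (n - m))" for h
      unfolding conv_def lessThan_Suc_atMost[symmetric] by simp
    have "(\<Sum>m<n. h1 m * x (n - m)) = (\<Sum>m<n. h2 m * x (n - m))"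
      using less by (intro sum.cong) auto
    moreover have "conv h1 x n = conv h2 x n" using assms(2) less.prems by simp
    ultimately have "h1 n * x 0 = h2 n * x 0" unfolding split by simp
    with assms(1) show ?case by simp
  qed
qed

lemma norm_sq_convex_combination:
  fixes u v :: "'a::real_inner"
  shows "norm (l *\<^sub>R u + (1 - l) *\<^sub>R v) ^ 2
    = l * norm u ^ 2 + (1 - l) * norm v ^ 2 - l * (1 - l) * norm (u - v) ^ 2"
  by (simp add: power2_norm_eq_inner inner_simps algebra_simps)

lemma sum_norm_sq_perm_average_less:
  fixes \<beta> :: "'i \<Rightarrow> 'a::real_inner"
  assumes "finite I" and "\<sigma> permutes I" and "\<sigma> \<noteq> id" and "inj_on \<beta> I"
    and "0 < l" and "l < 1"
  shows "(\<Sum>k\<in>I. norm (l *\<^sub>R \<beta> k + (1 - l) *\<^sub>R \<beta> (\<sigma> k)) ^ 2) < (\<Sum>k\<in>I. norm (\<beta> k) ^ 2)"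
proof -
  obtain k where k: "k \<in> I" "\<sigma> k \<noteq> k"
    using assms(2,3) unfolding permutes_def by fastforce
  with assms(2,4) have "\<beta> k \<noteq> \<beta> (\<sigma> k)"
    by (metis inj_onD permutes_in_image)
  with k assms(1) have spread: "0 < (\<Sum>k\<in>I. norm (\<beta> k - \<beta> (\<sigma> k)) ^ 2)"
    by (intro sum_pos2[of _ k]) auto
  have "(\<Sum>k\<in>I. norm (\<beta> (\<sigma> k)) ^ 2) = (\<Sum>k\<in>I. norm (\<beta> k) ^ 2)"
    using sum.permute[OF assms(2), of "\<lambda>k. norm (\<beta> k) ^ 2"] by simp
  then have "(\<Sum>k\<in>I. norm (l *\<^sub>R \<beta> k + (1 - l) *\<^sub>R \<beta> (\<sigma> k)) ^ 2)
      = (\<Sum>k\<in>I. norm (\<beta> k) ^ 2) - l * (1 - l) * (\<Sum>k\<in>I. norm (\<beta> k - \<beta> (\<sigma> k)) ^ 2)"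
    unfolding norm_sq_convex_combination sum_subtractf sum.distrib sum_distrib_left[symmetric]
    by (simp add: algebra_simps)
  with spread assms(5,6) show ?thesis by simp
qed

lemma sum_comp_eq_if_inj_on_image_subset:
  assumes "finite I" and "inj_on \<beta> I" and "\<beta> ` I \<subseteq> \<gamma> ` I"
  shows "(\<Sum>k\<in>I. f (\<gamma> k)) = (\<Sum>k\<in>I. f (\<beta> k))"
proof -
  have "card (\<gamma> ` I) \<le> card (\<beta> ` I)"
    using card_image_le[OF assms(1)] card_image[OF assms(2)] by metis
  with assms(1,3) have image_eq: "\<beta> ` I = \<gamma> ` I"
    by (simp add: card_seteq)
  with assms(1,2) have "inj_on \<gamma> I"
    by (metis card_image eq_card_imp_inj_on)
  with assms(2) image_eq show ?thesis
    by (metis sum.reindex_cong)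
qed

lemma h_list_eq_sum_nth: "h_list L n = (\<Sum>k<length L. fst (L ! k) * snd (L ! k) ^ n)"
  unfolding h_list_def by (simp add: sum_list_sum_nth atLeast0LessThan)

lemma h_set_eq_h_list: "distinct L \<Longrightarrow> h_set (set L) = h_list L"
  unfolding h_set_def h_list_def by (simp add: sum.distinct_set_conv_list)

lemma h_list_perm_ord:
  assumes "\<sigma> permutes {..<length L}"
  shows "h_list (perm_ord \<sigma> L) = h_list L"
proof
  fix n
  show "h_list (perm_ord \<sigma> L) n = h_list L n"
    using sum.permute[OF assms, of "\<lambda>k. fst (L ! k) * snd (L ! k) ^ n"]
    by (simp add: h_list_eq_sum_nth perm_ord_def)
qed

lemma h_list_cvx_perm_ord_differs:
  fixes L :: "(complex \<times> complex) list"
  assumes "distinct (map snd L)" and "\<forall>p\<in>set L. fst p \<noteq> 0"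
    and "\<sigma> permutes {..<length L}" and "\<sigma> \<noteq> id" and "0 < l" and "l < 1"
  shows "\<exists>n < 2 * length L. h_list (cvx l L (perm_ord \<sigma> L)) n \<noteq> h_list L n"
proof (rule ccontr)
  define K where "K = length L"
  define b where "b k = fst (L ! k)" for k
  define \<beta> where "\<beta> k = snd (L ! k)" for k
  define c where "c k = of_real l * b k + of_real (1 - l) * b (\<sigma> k)" for k
  define \<gamma> where "\<gamma> k = l *\<^sub>R \<beta> k + (1 - l) *\<^sub>R \<beta> (\<sigma> k)" for k
  assume "\<not> ?thesis"
  moreover have "h_list L n = (\<Sum>k<K. b k * \<beta> k ^ n)" for n
    by (simp add: h_list_eq_sum_nth K_def b_def \<beta>_def)
  moreover have "h_list (cvx l L (perm_ord \<sigma> L)) n = (\<Sum>k<K. c k * \<gamma> k ^ n)" for n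
    using permutes_in_image[OF assms(3)]
    by (simp add: h_list_eq_sum_nth cvx_def perm_ord_def K_def b_def \<beta>_def c_def \<gamma>_def
        scaleR_conv_of_real)
  ultimately have "\<forall>n < card {..<K} + card {..<K}.
      (\<Sum>k<K. b k * \<beta> k ^ n) = (\<Sum>k<K. c k * \<gamma> k ^ n)"
    by (simp add: K_def)
  moreover have "inj_on \<beta> {..<K}"
    using assms(1) by (auto simp: inj_on_def distinct_conv_nth K_def \<beta>_def)
  moreover have "\<forall>k\<in>{..<K}. b k \<noteq> 0"
    using assms(2) by (simp add: K_def b_def)
  ultimately have "\<beta> ` {..<K} \<subseteq> \<gamma> ` {..<K}"
    by (intro sum_powers_eq_imp_nodes_subset) auto
  with \<open>inj_on \<beta> {..<K}\<close> have "(\<Sum>k<K. norm (\<gamma> k) ^ 2) = (\<Sum>k<K. norm (\<beta> k) ^ 2)"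
    by (intro sum_comp_eq_if_inj_on_image_subset) auto
  moreover have "(\<Sum>k<K. norm (\<gamma> k) ^ 2) < (\<Sum>k<K. norm (\<beta> k) ^ 2)"
    unfolding \<gamma>_def using assms(3-6) \<open>inj_on \<beta> {..<K}\<close>
    by (intro sum_norm_sq_perm_average_less) (auto simp: K_def)
  ultimately show False by simp
qed

lemma trunc_in_vecs: "trunc N a \<in> vecs N"
  by (simp add: trunc_def vecs_def)

lemma trunc_eq_imp_eq_below:
  assumes "trunc N a = trunc N b" and "enat M \<le> N"
  shows "\<forall>n<M. a n = b n"
proof (intro allI impI)
  fix n assume "n < M"
  with assms(2) have "enat n < N" by (meson enat_ord_simps(2) order_less_le_trans)
  with fun_cong[OF assms(1), of n] show "a n = b n" by (simp add: trunc_def)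
qed

lemma objective_eq_0_iff:
  assumes "\<forall>a\<in>vecs N. \<forall>b\<in>vecs N. d a b = 0 \<longleftrightarrow> a = b"
  shows "objective d N y x L = 0 \<longleftrightarrow> trunc N y = trunc N (conv (h_list L) x)"
  using assms by (simp add: objective_def trunc_in_vecs)

lemma objective_pos_if_h_list_differs_below:
  assumes "x 0 \<noteq> 0" and "y = conv h x" and "enat M \<le> N"
    and "\<forall>a\<in>vecs N. \<forall>b\<in>vecs N. d a b \<ge> 0"
    and "\<forall>a\<in>vecs N. \<forall>b\<in>vecs N. d a b = 0 \<longleftrightarrow> a = b"
    and "n < M" and "h_list L n \<noteq> h n"
  shows "objective d N y x L > 0"
proof -
  have "trunc N y \<noteq> trunc N (conv (h_list L) x)"
  proof
    assume "trunc N y = trunc N (conv (h_list L) x)"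
    from trunc_eq_imp_eq_below[OF this assms(3)]
    have "\<forall>n<M. conv h x n = conv (h_list L) x n" unfolding assms(2) .
    with assms(1) have "\<forall>n<M. h n = h_list L n" by (rule conv_eq_imp_eq_below)
    with assms(6,7) show False by simp
  qed
  with objective_eq_0_iff[OF assms(5)] have "objective d N y x L \<noteq> 0" by simp
  moreover have "objective d N y x L \<ge> 0"
    using assms(4) by (simp add: objective_def trunc_in_vecs)
  ultimately show ?thesis by simp
qed

theorem mainTheorem7:
  fixes K :: nat and N :: enat and B :: "(complex \<times> complex) set"
    and x :: "nat \<Rightarrow> complex" and y :: "nat \<Rightarrow> complex"
    and d :: "(nat \<Rightarrow> complex) \<Rightarrow> (nat \<Rightarrow> complex) \<Rightarrow> real"
    and Bord :: "(complex \<times> complex) list" and \<sigma> :: "nat \<Rightarrow> nat"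
  assumes "K \<ge> 2" and "enat (2 * K) \<le> N"
    and "fully_simplified B" and "card B = K"
    and "x 0 \<noteq> 0" and "y = conv (h_set B) x"
    and "\<forall>a\<in>vecs N. \<forall>b\<in>vecs N. d a b \<ge> 0"
    and "\<forall>a\<in>vecs N. \<forall>b\<in>vecs N. d a b = 0 \<longleftrightarrow> a = b"
    and "distinct Bord" and "set Bord = B"
    and "\<sigma> permutes {..<K}" and "\<sigma> \<noteq> id"
  shows "objective d N y x Bord = 0 \<and> objective d N y x (perm_ord \<sigma> Bord) = 0
      \<and> (\<forall>l::real. 0 < l \<and> l < 1 \<longrightarrow>
            objective d N y x (cvx l Bord (perm_ord \<sigma> Bord)) > 0)
      \<and> \<not> (\<forall>U V (l::real). length U = K \<and> length V = K \<and> 0 \<le> l \<and> l \<le> 1 \<longrightarrow>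
            objective d N y x (cvx l U V)
              \<le> l * objective d N y x U + (1 - l) * objective d N y x V)"
proof -
  have len: "length Bord = K" using assms(4,9,10) distinct_card by metis
  then have len_perm: "length (perm_ord \<sigma> Bord) = K" by (simp add: perm_ord_def)
  have y: "y = conv (h_list Bord) x" using assms(6,9,10) h_set_eq_h_list by metis
  have zero: "objective d N y x Bord = 0" "objective d N y x (perm_ord \<sigma> Bord) = 0"
    using objective_eq_0_iff[OF assms(8)] y h_list_perm_ord assms(11) len by simp_all
  have pos: "objective d N y x (cvx l Bord (perm_ord \<sigma> Bord)) > 0" if "0 < l" "l < 1" for l
  proof -
    have "distinct (map snd Bord)" "\<forall>p\<in>set Bord. fst p \<noteq> 0"
      using assms(3,9,10) by (simp_all add: fully_simplified_def distinct_map)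
    with h_list_cvx_perm_ord_differs[OF _ _ _ assms(12) that] assms(11) len
    obtain n where "n < 2 * K" "h_list (cvx l Bord (perm_ord \<sigma> Bord)) n \<noteq> h_list Bord n"
      by auto
    with objective_pos_if_h_list_differs_below[OF assms(5) y assms(2,7,8)] show ?thesis by blast
  qed
  have "\<not> objective d N y x (cvx (1/2) Bord (perm_ord \<sigma> Bord))
      \<le> 1/2 * objective d N y x Bord + (1 - 1/2) * objective d N y x (perm_ord \<sigma> Bord)"
    using pos[of "1/2"] zero by simp
  moreover have "(0::real) \<le> 1/2" "(1/2::real) \<le> 1" by simp_all
  ultimately show ?thesis
    using zero pos len len_perm by blast
qed

end
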